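(* Let $f(z)=\lambda z+bz^2+z^3$ have a Siegel disk $\Delta(f)$ around $0$. Then for every compact set $\widetilde K\subset\Delta(f)$ there exists $\delta(\widetilde K)>0$ such that $\widetilde K\subset A(f_\varepsilon)$ for every $0<\varepsilon<\delta(\widetilde K)$.
   Context: For $f(z)=\lambda z+bz^2+z^3$ with $|\lambda|\le1$ and $\varepsilon>0$, $f_\varepsilon(z)=(1-\varepsilon)\lambda z+bz^2+z^3$. For a map $g$ with attracting fixed point $0$, $A(g)$ denotes the immediate basin of attraction of $0$. A Siegel disk around $0$ is the maximal neighborhood of the irrationally indifferent fixed point $0$ on which $f$ is analytically conjugate to a rotation. *)

theory Defs
  imports "HOL-Analysis.Analysis"
begin

definition cubic :: "complex \<Rightarrow> complex \<Rightarrow> complex \<Rightarrow> complex" where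
  "cubic lam b z = lam * z + b * z^2 + z^3"

definition perturbed :: "complex \<Rightarrow> complex \<Rightarrow> real \<Rightarrow> complex \<Rightarrow> complex" where
  "perturbed lam b eps z = (1 - complex_of_real eps) * lam * z + b * z^2 + z^3"

definition irrationally_indifferent :: "complex \<Rightarrow> bool" where
  "irrationally_indifferent lam \<longleftrightarrow>
     (\<exists>\<theta>::real. \<theta> \<notin> \<rat> \<and> lam = exp (2 * pi * \<i> * complex_of_real \<theta>))"

definition linearization_domain ::
  "(complex \<Rightarrow> complex) \<Rightarrow> complex \<Rightarrow> complex set \<Rightarrow> bool" where
  "linearization_domain g lam U \<longleftrightarrow>
     open U \<and> connected U \<and> 0 \<in> U \<and>
     (\<exists>\<phi> r. r > 0 \<and> \<phi> holomorphic_on U \<and> bij_betw \<phi> U (ball 0 r) \<and> \<phi> 0 = 0 \<and>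
        (\<forall>z\<in>U. g z \<in> U \<and> \<phi> (g z) = lam * \<phi> z))"

definition siegel_disk ::
  "(complex \<Rightarrow> complex) \<Rightarrow> complex \<Rightarrow> complex set \<Rightarrow> bool" where
  "siegel_disk g lam \<Delta> \<longleftrightarrow>
     g 0 = 0 \<and> (g has_field_derivative lam) (at 0) \<and> irrationally_indifferent lam \<and>
     linearization_domain g lam \<Delta> \<and>
     (\<forall>U. linearization_domain g lam U \<longrightarrow> U \<subseteq> \<Delta>)"

definition basin :: "(complex \<Rightarrow> complex) \<Rightarrow> complex set" where
  "basin g = {z. (\<lambda>n. (g ^^ n) z) \<longlonglongrightarrow> 0}"

definition immediate_basin :: "(complex \<Rightarrow> complex) \<Rightarrow> complex set" where
  "immediate_basin g = connected_component_set (basin g) 0"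

end

theory Submission
  imports Defs "HOL-Complex_Analysis.Complex_Analysis"
begin

text \<open>In the linearising coordinate u = \<phi> z of the Siegel disk the map acts as the rotation
  u \<mapsto> lam u. Perturbing the map by -\<epsilon> lam z changes its N-th iterate, read in that coordinate,
  to first order by -\<epsilon> lam^N u times a Birkhoff sum, along the rotation, of a holomorphic
  function with value 1 at the centre. Since lam is not a root of unity these averages tend to 1
  uniformly, so for large N and small \<epsilon> > 0 the N-th iterate maps the circle of radius t strictly
  inside itself. By the Schwarz lemma it then contracts the whole disc, whose preimage is connected,
  contains 0 and, for t close to the conformal radius, covers the given compact set.\<close>

lemma tube_lemma_ball:
  fixes \<Phi> :: "'a::metric_space \<times> 'b::topological_space \<Rightarrow> 'c::topological_space"
  assumes cont: "continuous_on UNIV \<Phi>" and "compact C" and "open U"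
    and into: "\<And>z. z \<in> C \<Longrightarrow> \<Phi> (e0, z) \<in> U"
  obtains \<rho> where "0 < \<rho>" "\<And>e z. dist e e0 < \<rho> \<Longrightarrow> z \<in> C \<Longrightarrow> \<Phi> (e, z) \<in> U"
proof -
  have "open (\<Phi> -` U)"
    using cont \<open>open U\<close> continuous_on_open_vimage[of UNIV \<Phi>] by auto
  moreover have "{e0} \<times> C \<subseteq> \<Phi> -` U" using into by auto
  ultimately obtain X where "e0 \<in> X" "open X" "X \<times> C \<subseteq> \<Phi> -` U"
    using Elementary_Topology.tube_lemma[OF \<open>compact C\<close>] by metis
  then obtain \<rho> where "0 < \<rho>" "ball e0 \<rho> \<subseteq> X"
    by (meson openE)
  then show ?thesis
    using that \<open>X \<times> C \<subseteq> \<Phi> -` U\<close> by (force simp: dist_commute)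
qed

lemma compact_subset_ball_imp_smaller_ball:
  fixes S :: "'a::metric_space set"
  assumes "compact S" "S \<subseteq> ball x r" "0 < r"
  obtains t where "0 < t" "t < r" "S \<subseteq> ball x t"
proof -
  have "S \<subseteq> (\<Union>t\<in>{0<..<r}. ball x t)"
  proof
    fix y assume "y \<in> S"
    then have "dist x y < r" using assms(2) by auto
    then show "y \<in> (\<Union>t\<in>{0<..<r}. ball x t)"
      by (intro UN_I[of "(dist x y + r) / 2"]) (use assms(3) in \<open>auto intro: add_nonneg_pos\<close>)
  qed
  then obtain T where T: "T \<subseteq> {0<..<r}" "finite T" "S \<subseteq> (\<Union>t\<in>T. ball x t)"
    using compactE_image[OF assms(1), of "{0<..<r}" "ball x"] by blast
  define t where "t = Max (insert (r/2) T)"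
  have "t \<in> insert (r/2) T" unfolding t_def using T(2) by (intro Max_in) auto
  then have "0 < t" "t < r" using T(1) assms(3) by auto
  moreover have "S \<subseteq> ball x t"
  proof
    fix y assume "y \<in> S"
    then obtain s where "s \<in> T" "y \<in> ball x s" using T(3) by blast
    moreover have "s \<le> t" unfolding t_def using T(2) \<open>s \<in> T\<close> by (intro Max_ge) auto
    ultimately show "y \<in> ball x t" by auto
  qed
  ultimately show ?thesis by (rule that)
qed

section \<open>Holomorphic estimates\<close>

lemma norm_sums_le:
  fixes f :: "nat \<Rightarrow> 'a::banach"
  assumes "f sums s" "g sums T" "\<And>n. norm (f n) \<le> g n"
  shows "norm s \<le> T"
proof -
  have "summable g" using assms(2) sums_summable by blast
  moreover have "summable (\<lambda>n. norm (f n))"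
    by (rule summable_comparison_test'[OF \<open>summable g\<close>]) (use assms(3) in auto)
  ultimately have "norm (suminf f) \<le> suminf g"
    using summable_norm suminf_le assms(3) by (metis order_trans)
  then show ?thesis using assms(1,2) sums_unique by metis
qed

lemma holomorphic_taylor2_remainder_bound:
  fixes h :: "complex \<Rightarrow> complex"
  assumes hol: "h holomorphic_on ball 0 R" and bd: "\<And>e. e \<in> ball 0 R \<Longrightarrow> norm (h e) \<le> M"
    and "0 < \<rho>" "\<rho> < R" and e: "norm e < \<rho>"
  shows "norm (h e - h 0 - deriv h 0 * e) \<le> M * (norm e / \<rho>)^2 / (1 - norm e / \<rho>)"
proof -
  define c where "c n = (deriv ^^ n) h 0 / fact n" for n
  define x where "x = norm e / \<rho>"
  have x: "0 \<le> x" "x < 1" using e \<open>0 < \<rho>\<close> by (auto simp: x_def)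
  have "(\<lambda>n. c n * e^n) sums h e"
    using holomorphic_power_series[OF hol, of e] e \<open>\<rho> < R\<close> by (simp add: c_def)
  then have tail: "(\<lambda>n. c (n+2) * e^(n+2)) sums (h e - h 0 - deriv h 0 * e)"
    using sums_iff_shift[of "\<lambda>n. c n * e^n" 2] by (simp add: c_def numeral_2_eq_2 algebra_simps)
  have cauchy: "norm ((deriv ^^ n) h 0) \<le> fact n * M / \<rho>^n" for n
  proof (rule Cauchy_inequality)
    show "h holomorphic_on ball 0 \<rho>" "continuous_on (cball 0 \<rho>) h"
      using \<open>\<rho> < R\<close> by (auto intro!: holomorphic_on_imp_continuous_on intro: holomorphic_on_subset[OF hol])
    show "norm (h x) \<le> M" if "norm (0 - x) = \<rho>" for x using that bd \<open>\<rho> < R\<close> by auto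
  qed fact
  have coeff: "norm (c n * e^n) \<le> M * x^n" for n
  proof -
    have "norm (c n * e^n) = norm ((deriv ^^ n) h 0) / fact n * norm e ^ n"
      by (simp add: c_def norm_mult norm_divide norm_power)
    also have "\<dots> \<le> (fact n * M / \<rho>^n) / fact n * norm e ^ n"
      by (intro mult_right_mono divide_right_mono cauchy) auto
    also have "\<dots> = M * x^n" by (simp add: x_def power_divide)
    finally show ?thesis .
  qed
  have "(\<lambda>n. M * x^2 * x^n) sums (M * x^2 * (1 / (1 - x)))"
    by (intro sums_mult geometric_sums) (use x in auto)
  moreover have "norm (c (n+2) * e^(n+2)) \<le> M * x^2 * x^n" for n
    using coeff[of "n+2"] by (simp add: power_add power2_eq_square mult_ac)
  ultimately have "norm (h e - h 0 - deriv h 0 * e) \<le> M * x^2 * (1 / (1 - x))"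
    by (rule norm_sums_le[OF tail])
  then show ?thesis by (simp add: x_def)
qed

lemma norm_one_minus_real_mult_le:
  fixes S :: complex and \<epsilon> a :: real
  assumes "0 \<le> \<epsilon>" "\<epsilon> * a \<le> 1" "a \<le> Re S"
  shows "norm (1 - of_real \<epsilon> * S) \<le> 1 - \<epsilon> * a + \<epsilon>^2 * (norm S)^2 / 2"
proof (rule power2_le_imp_le)
  define x where "x = \<epsilon> * a - \<epsilon>^2 * (norm S)^2 / 2"
  have "0 \<le> \<epsilon>^2 * (norm S)^2 / 2" by simp
  then have "x \<le> 1" using assms(2) unfolding x_def by linarith
  have "(norm (1 - of_real \<epsilon> * S))^2 = (1 - \<epsilon> * Re S)^2 + (\<epsilon> * Im S)^2"
    by (simp add: cmod_power2)
  also have "\<dots> = 1 - 2*\<epsilon>*Re S + \<epsilon>^2 * ((Re S)^2 + (Im S)^2)"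
    by (simp add: power2_eq_square algebra_simps)
  also have "\<dots> = 1 - 2*\<epsilon>*Re S + \<epsilon>^2 * (norm S)^2"
    by (simp add: cmod_power2)
  also have "\<dots> \<le> 1 - 2 * x"
    using assms by (simp add: x_def mult_left_mono)
  also have "\<dots> \<le> (1 - x)^2" by (simp add: power2_eq_square algebra_simps)
  finally show "(norm (1 - of_real \<epsilon> * S))^2 \<le> (1 - \<epsilon> * a + \<epsilon>^2 * (norm S)^2 / 2)^2"
    by (simp add: x_def algebra_simps)
  show "0 \<le> 1 - \<epsilon> * a + \<epsilon>^2 * (norm S)^2 / 2" using \<open>x \<le> 1\<close> by (simp add: x_def)
qed

lemma norm_holomorphic_first_order_le:
  fixes h :: "complex \<Rightarrow> complex" and S :: complex
  assumes hol: "h holomorphic_on ball 0 R" and bd: "\<And>e. e \<in> ball 0 R \<Longrightarrow> norm (h e) \<le> M"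
    and \<rho>: "0 < \<rho>" "\<rho> < R" and \<epsilon>: "0 \<le> \<epsilon>" "\<epsilon> \<le> \<rho> / 2"
    and dh: "deriv h 0 = - h 0 * S" and a: "a \<le> Re S" "\<epsilon> * a \<le> 1"
  shows "norm (h (of_real \<epsilon>)) \<le> norm (h 0) * (1 - \<epsilon> * a + \<epsilon>^2 * (norm S)^2 / 2) + 2 * M * \<epsilon>^2 / \<rho>^2"
proof -
  define R2 where "R2 = h (of_real \<epsilon>) - h 0 - deriv h 0 * of_real \<epsilon>"
  have "norm R2 \<le> M * (\<epsilon> / \<rho>)^2 / (1 - \<epsilon> / \<rho>)"
    using holomorphic_taylor2_remainder_bound[OF hol bd \<rho>, of "of_real \<epsilon>"] \<epsilon> \<rho>
    by (simp add: R2_def)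
  also have "\<dots> \<le> M * (\<epsilon> / \<rho>)^2 / (1/2)"
  proof (rule divide_left_mono)
    have "norm (h 0) \<le> M" using bd \<rho> by simp
    then show "0 \<le> M * (\<epsilon> / \<rho>)^2" by (simp add: order_trans[OF norm_ge_zero])
  qed (use \<epsilon> \<rho> in \<open>auto simp: field_simps\<close>)
  also have "\<dots> = 2 * M * \<epsilon>^2 / \<rho>^2" by (simp add: power_divide)
  finally have R2: "norm R2 \<le> 2 * M * \<epsilon>^2 / \<rho>^2" .
  have "h (of_real \<epsilon>) = h 0 * (1 - of_real \<epsilon> * S) + R2"
    by (simp add: R2_def dh algebra_simps)
  then have "norm (h (of_real \<epsilon>)) \<le> norm (h 0) * norm (1 - of_real \<epsilon> * S) + norm R2"
    by (metis norm_mult norm_triangle_ineq)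
  also have "\<dots> \<le> norm (h 0) * (1 - \<epsilon> * a + \<epsilon>^2 * (norm S)^2 / 2) + 2 * M * \<epsilon>^2 / \<rho>^2"
    using norm_one_minus_real_mult_le[OF \<epsilon>(1) a(2,1)] R2 by (intro add_mono mult_left_mono) auto
  finally show ?thesis .
qed

lemma Schwarz_cball_bound:
  fixes H :: "complex \<Rightarrow> complex"
  assumes hol: "H holomorphic_on ball 0 R" and "H 0 = 0" and t: "0 < t" "t < R"
    and circle: "\<And>w. norm w = t \<Longrightarrow> norm (H w) \<le> c * t" and w: "norm w \<le> t"
  shows "norm (H w) \<le> c * norm w"
proof -
  obtain h where holh: "h holomorphic_on ball 0 R" and Hh: "\<And>z. norm z < R \<Longrightarrow> H z = z * h z"
    using Schwarz3[OF hol \<open>H 0 = 0\<close>] by metis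
  have "norm (h w) \<le> c"
  proof (rule maximum_modulus_frontier[of h "cball 0 t"])
    show "h holomorphic_on interior (cball 0 t)"
      using t by (auto intro: holomorphic_on_subset[OF holh])
    show "continuous_on (closure (cball 0 t)) h"
      using t by (auto intro!: holomorphic_on_imp_continuous_on intro: holomorphic_on_subset[OF holh])
    show "norm (h z) \<le> c" if "z \<in> frontier (cball 0 t)" for z
    proof -
      have "norm z = t" using that t by simp
      then have "t * norm (h z) \<le> c * t" using circle[of z] Hh[of z] t by (simp add: norm_mult)
      then show ?thesis using t by (simp add: mult.commute)
    qed
  qed (use w in auto)
  then have "norm w * norm (h w) \<le> norm w * c" by (simp add: mult_left_mono)
  then show ?thesis using Hh[of w] w t by (simp add: norm_mult mult.commute)
qed

section \<open>Averages along an irrational rotation\<close>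

definition geometric_average :: "nat \<Rightarrow> complex \<Rightarrow> complex" where
  "geometric_average N \<mu> = (\<Sum>k<N. \<mu>^k) / of_nat N"

lemma norm_geometric_sum_le:
  fixes \<mu> :: complex
  assumes "norm \<mu> = 1" "\<mu> \<noteq> 1"
  shows "norm (\<Sum>k<N. \<mu>^k) \<le> 2 / norm (\<mu> - 1)"
proof -
  have "norm (\<mu>^N - 1) \<le> 2"
    using norm_triangle_ineq4[of "\<mu>^N" 1] assms(1) by (simp add: norm_power)
  then show ?thesis
    using assms(2) by (simp add: geometric_sum norm_divide divide_right_mono)
qed

lemma norm_geometric_average_le_1:
  assumes "norm \<mu> = 1"
  shows "norm (geometric_average N \<mu>) \<le> 1"
proof -
  have "norm (\<Sum>k<N. \<mu>^k) \<le> (\<Sum>k<N. norm (\<mu>^k))" by (rule norm_sum)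
  also have "\<dots> = real N" using assms by (simp add: norm_power)
  finally show ?thesis by (simp add: geometric_average_def norm_divide divide_le_eq)
qed

lemma geometric_average_tendsto_0:
  assumes "norm \<mu> = 1" "\<mu> \<noteq> 1"
  shows "(\<lambda>N. geometric_average N \<mu>) \<longlonglongrightarrow> 0"
proof (rule Lim_null_comparison)
  have "norm (geometric_average N \<mu>) \<le> 2 / norm (\<mu> - 1) / real N" for N
    unfolding geometric_average_def norm_divide norm_of_nat
    by (rule divide_right_mono[OF norm_geometric_sum_le[OF assms]]) simp
  then show "\<forall>\<^sub>F N in sequentially. norm (geometric_average N \<mu>) \<le> 2 / norm (\<mu> - 1) / real N"
    by simp
  show "(\<lambda>N. 2 / norm (\<mu> - 1) / real N) \<longlonglongrightarrow> 0"
    by (rule lim_const_over_n)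
qed

lemma summable_weighted_geometric_averages:
  fixes M :: "nat \<Rightarrow> real"
  assumes "summable M" "\<And>m. 0 \<le> M m" "norm lam = 1"
  shows "summable (\<lambda>m. M m * norm (geometric_average N (lam ^ Suc m)))"
proof (rule summable_comparison_test'[OF assms(1)])
  show "norm (M m * norm (geometric_average N (lam ^ Suc m))) \<le> M m" for m
    using mult_left_le[OF norm_geometric_average_le_1 assms(2)] assms(2,3)
    by (simp add: norm_power norm_mult del: power_Suc)
qed

lemma weighted_geometric_averages_tendsto_0:
  fixes M :: "nat \<Rightarrow> real"
  assumes M: "summable M" "\<And>m. 0 \<le> M m"
    and lam: "norm lam = 1" and nr: "\<And>m::nat. 0 < m \<Longrightarrow> lam^m \<noteq> 1"
  shows "(\<lambda>N. \<Sum>m. M m * norm (geometric_average N (lam ^ Suc m))) \<longlonglongrightarrow> 0"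
proof -
  have "(\<lambda>N. \<Sum>m. M m * norm (geometric_average N (lam ^ Suc m))) \<longlonglongrightarrow> (\<Sum>m. 0)"
  proof (rule tannerys_theorem[THEN conjunct2, THEN conjunct2, OF _ _ M(1)])
    show "(\<lambda>N. M m * norm (geometric_average N (lam ^ Suc m))) \<longlonglongrightarrow> 0" for m
      by (intro tendsto_mult_right_zero tendsto_norm_zero geometric_average_tendsto_0 nr)
         (auto simp: lam norm_power norm_mult)
    have bound: "norm (M m * norm (geometric_average N (lam ^ Suc m))) \<le> M m" for m N
      using mult_left_le[OF norm_geometric_average_le_1 M(2)] M(2) lam
      by (simp add: norm_power norm_mult del: power_Suc)
    show "\<forall>\<^sub>F (m, N) in at_top \<times>\<^sub>F sequentially.
        norm (M m * norm (geometric_average N (lam ^ Suc m))) \<le> M m"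
      unfolding case_prod_beta by (intro always_eventually allI bound)
  qed simp
  then show ?thesis by simp
qed

lemma sums_rotation_average:
  fixes g :: "complex \<Rightarrow> complex"
  assumes hol: "g holomorphic_on ball 0 R" and lam: "norm lam = 1" and w: "norm w < R"
  shows "(\<lambda>m. (deriv ^^ m) g 0 / fact m * w^m * geometric_average N (lam^m))
    sums ((\<Sum>k<N. g (lam^k * w)) / of_nat N)"
proof -
  have "(\<lambda>m. \<Sum>k<N. (deriv ^^ m) g 0 / fact m * (lam^k * w)^m) sums (\<Sum>k<N. g (lam^k * w))"
    using holomorphic_power_series[OF hol] w lam by (intro sums_sum) (simp add: norm_mult norm_power)
  then have "(\<lambda>m. (deriv ^^ m) g 0 / fact m * w^m * (\<Sum>k<N. (lam^m)^k)) sums (\<Sum>k<N. g (lam^k * w))"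
    by (simp add: sum_distrib_left sum_divide_distrib power_mult_distrib mult_ac flip: power_mult)
  from sums_divide[OF this, of "of_nat N"] show ?thesis
    by (simp add: geometric_average_def)
qed

text \<open>Each nonconstant monomial averages to zero along the rotation; Tannery's theorem passes
  the limit through the power series.\<close>
lemma uniform_limit_rotation_averages:
  fixes g :: "complex \<Rightarrow> complex"
  assumes hol: "g holomorphic_on ball 0 R" and "t < R" and lam: "norm lam = 1"
    and nr: "\<And>m::nat. 0 < m \<Longrightarrow> lam^m \<noteq> 1"
  shows "uniform_limit (cball 0 t) (\<lambda>N w. (\<Sum>k<N. g (lam^k * w)) / of_nat N) (\<lambda>w. g 0) sequentially"
proof (cases "t < 0")
  case True
  then show ?thesis by (simp add: uniform_limit_iff)
next
  case False
  define c where "c m = (deriv ^^ m) g 0 / fact m" for m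
  define M where "M m = norm (c (Suc m) * of_real t ^ Suc m)" for m
  define E where "E N = (\<Sum>m. M m * norm (geometric_average N (lam ^ Suc m)))" for N
  define t2 where "t2 = (t + R) / 2"
  have t2: "t < t2" "t2 < R" using \<open>t < R\<close> by (auto simp: t2_def)
  have "(\<lambda>m. c m * of_real t2 ^ m) sums g (of_real t2)"
    using holomorphic_power_series[OF hol, of "of_real t2"] t2 False by (simp add: c_def)
  then have "summable (\<lambda>m. c m * of_real t2 ^ m)" by (rule sums_summable)
  then have "summable (\<lambda>m. norm (c m * of_real t ^ m))"
    by (rule powser_insidea) (use t2 False in simp)
  then have M: "summable M"
    unfolding M_def by (subst summable_Suc_iff)
  have M_nonneg: "0 \<le> M m" for m by (simp add: M_def)
  have E0: "E \<longlonglongrightarrow> 0"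
    unfolding E_def by (rule weighted_geometric_averages_tendsto_0[OF M M_nonneg lam nr])
  have error: "norm ((\<Sum>k<N. g (lam^k * w)) / of_nat N - g 0) \<le> E N"
    if "0 < N" "w \<in> cball 0 t" for N w
  proof -
    have "(\<lambda>m. c m * w^m * geometric_average N (lam^m)) sums ((\<Sum>k<N. g (lam^k * w)) / of_nat N)"
      using sums_rotation_average[OF hol lam] that \<open>t < R\<close> by (simp add: c_def)
    moreover have "c 0 * w^0 * geometric_average N (lam^0) = g 0"
      using \<open>0 < N\<close> by (simp add: c_def geometric_average_def)
    ultimately have tail: "(\<lambda>m. c (Suc m) * w^Suc m * geometric_average N (lam ^ Suc m))
        sums ((\<Sum>k<N. g (lam^k * w)) / of_nat N - g 0)"
      using sums_Suc_iff[of "\<lambda>m. c m * w^m * geometric_average N (lam^m)"] by simp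
    have "norm (c (Suc m) * w^Suc m * geometric_average N (lam ^ Suc m))
        \<le> M m * norm (geometric_average N (lam ^ Suc m))" for m
      using that False unfolding M_def norm_mult norm_power norm_of_real
      by (intro mult_right_mono mult_left_mono power_mono) auto
    then show ?thesis unfolding E_def
      by (rule norm_sums_le[OF tail summable_sums[OF summable_weighted_geometric_averages[OF M M_nonneg lam]]])
  qed
  show ?thesis
  proof (rule uniform_limitI)
    fix e :: real assume "0 < e"
    have "\<forall>\<^sub>F N in sequentially. 0 < N \<and> E N < e"
      by (intro eventually_conj eventually_gt_at_top order_tendstoD(2)[OF E0 \<open>0 < e\<close>])
    then show "\<forall>\<^sub>F N in sequentially. \<forall>w\<in>cball 0 t. dist ((\<Sum>k<N. g (lam^k * w)) / of_nat N) (g 0) < e"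
    proof eventually_elim
      case (elim N)
      then show ?case using error[of N] by (fastforce simp: dist_norm)
    qed
  qed
qed

lemma bounds_of_average_near_1:
  fixes S :: complex
  assumes "0 < N" "dist (S / of_nat N) 1 < 1/2"
  shows "real N / 2 \<le> Re S" "norm S \<le> 3/2 * real N"
proof -
  define q where "q = S / of_nat N"
  have S: "S = of_nat N * q" using assms(1) by (simp add: q_def)
  have q: "norm (q - 1) < 1/2" using assms(2) by (simp add: q_def dist_norm)
  then have "1/2 \<le> Re q" using abs_Re_le_cmod[of "q - 1"] by auto
  then show "real N / 2 \<le> Re S" using assms(1) by (simp add: S)
  have "norm q \<le> norm (q - 1) + 1" by (metis diff_add_cancel norm_one norm_triangle_ineq)
  then have "norm q \<le> 3/2" using q by linarith
  then show "norm S \<le> 3/2 * real N"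
    using mult_left_mono[of "norm q" "3/2" "real N"] by (simp add: S norm_mult mult.commute)
qed

lemma LIMSEQ_of_residue_subsequences:
  fixes y :: "nat \<Rightarrow> 'a::metric_space"
  assumes N: "0 < N" and lim: "\<And>j. j < N \<Longrightarrow> (\<lambda>n. y (n*N + j)) \<longlonglongrightarrow> L"
  shows "y \<longlonglongrightarrow> L"
proof (rule metric_LIMSEQ_I)
  fix r :: real assume r: "r > 0"
  have "\<forall>j\<in>{..<N}. \<exists>n0. \<forall>n\<ge>n0. dist (y (n*N + j)) L < r"
    using lim metric_LIMSEQ_D r by blast
  then obtain n0 where n0: "\<And>j n. j < N \<Longrightarrow> n \<ge> n0 j \<Longrightarrow> dist (y (n*N + j)) L < r"
    by (metis lessThan_iff)
  show "\<exists>no. \<forall>n\<ge>no. dist (y n) L < r"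
  proof (intro exI allI impI)
    fix n assume n: "n \<ge> (Max (n0 ` {..<N}) + 1) * N"
    have j: "n mod N < N" using N by simp
    have "n div N \<ge> Max (n0 ` {..<N}) + 1" using n N by (metis div_le_mono div_mult_self_is_m)
    moreover have "n0 (n mod N) \<le> Max (n0 ` {..<N})" using j by (intro Max_ge) auto
    ultimately have "n div N \<ge> n0 (n mod N)" by simp
    from n0[OF j this] show "dist (y n) L < r" by simp
  qed
qed

lemma continuous_on_funpow:
  fixes F :: "'a::topological_space \<Rightarrow> 'a"
  assumes "continuous_on UNIV F"
  shows "continuous_on UNIV (F ^^ n)"
proof (induction n)
  case (Suc n)
  have "continuous_on UNIV (F \<circ> (F ^^ n))"
    using continuous_on_compose[OF Suc] assms continuous_on_subset by blast
  then show ?case by simp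
qed simp

lemma orbit_tendsto_fixpoint_if_orbit_of_iterate:
  fixes F :: "'a::metric_space \<Rightarrow> 'a"
  assumes cont: "continuous_on UNIV F" and fixed: "F p = p" and "0 < N"
    and lim: "(\<lambda>n. ((F ^^ N) ^^ n) z) \<longlonglongrightarrow> p"
  shows "(\<lambda>n. (F ^^ n) z) \<longlonglongrightarrow> p"
proof (rule LIMSEQ_of_residue_subsequences[OF \<open>0 < N\<close>])
  fix j
  have "isCont (F ^^ j) p"
    using continuous_on_funpow[OF cont] by (simp add: continuous_on_eq_continuous_at)
  moreover have "(F ^^ j) p = p" using fixed by (induction j) auto
  ultimately have "(\<lambda>n. (F ^^ j) (((F ^^ N) ^^ n) z)) \<longlonglongrightarrow> p"
    using isCont_tendsto_compose[OF _ lim] by metis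
  moreover have "(F ^^ (n*N + j)) z = (F ^^ j) (((F ^^ N) ^^ n) z)" for n
    by (simp only: funpow_mult mult.commute[of N n] add.commute[of "n*N" j] funpow_add o_apply)
  ultimately show "(\<lambda>n. (F ^^ (n*N + j)) z) \<longlonglongrightarrow> p" by simp
qed

lemma funpow_tendsto_0_if_contraction:
  fixes H :: "'a::real_normed_vector \<Rightarrow> 'a"
  assumes contr: "\<And>w. norm w \<le> t \<Longrightarrow> norm (H w) \<le> c * norm w" and c: "0 \<le> c" "c < 1"
    and w: "norm w \<le> t"
  shows "(\<lambda>n. (H ^^ n) w) \<longlonglongrightarrow> 0"
proof (rule Lim_null_comparison)
  have "norm ((H ^^ n) w) \<le> c^n * norm w" for n
  proof (induction n)
    case (Suc n)
    have "c^n * norm w \<le> norm w" using c by (simp add: mult_left_le_one_le power_le_one)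
    then have "norm ((H ^^ n) w) \<le> t" using Suc w by linarith
    then have "norm ((H ^^ Suc n) w) \<le> c * norm ((H ^^ n) w)" using contr by simp
    also have "\<dots> \<le> c * (c^n * norm w)" using Suc c by (intro mult_left_mono)
    also have "\<dots> = c^Suc n * norm w" by simp
    finally show ?case .
  qed simp
  then show "\<forall>\<^sub>F n in sequentially. norm ((H ^^ n) w) \<le> c^n * norm w" by simp
  show "(\<lambda>n. c^n * norm w) \<longlonglongrightarrow> 0"
    by (intro tendsto_mult_left_zero LIMSEQ_power_zero) (use c in auto)
qed

lemma funpow_semiconj:
  assumes "\<And>w. w \<in> S \<Longrightarrow> H w \<in> S" "\<And>w. w \<in> S \<Longrightarrow> G (h w) = h (H w)" "w \<in> S"
  shows "(G ^^ n) (h w) = h ((H ^^ n) w)"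
proof -
  have "(H ^^ n) w \<in> S \<and> (G ^^ n) (h w) = h ((H ^^ n) w)"
    by (induction n) (use assms in auto)
  then show ?thesis ..
qed

definition perturb :: "(complex \<Rightarrow> complex) \<Rightarrow> complex \<Rightarrow> complex \<Rightarrow> complex \<Rightarrow> complex" where
  "perturb f lam e z = f z - e * lam * z"

lemma perturb_0 [simp]: "perturb f lam 0 = f"
  by (simp add: perturb_def fun_eq_iff)

lemma funpow_perturb_fixes_0: "f 0 = 0 \<Longrightarrow> (perturb f lam e ^^ k) 0 = 0"
  by (induction k) (simp_all add: perturb_def)

lemma holomorphic_on_compose_entire:
  "g holomorphic_on UNIV \<Longrightarrow> h holomorphic_on S \<Longrightarrow> (\<lambda>z. g (h z)) holomorphic_on S"
  using holomorphic_on_compose_gen[of h S g UNIV] by (simp add: o_def)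

lemma holomorphic_funpow_perturb:
  assumes "f holomorphic_on UNIV"
  shows "(\<lambda>z. (perturb f lam e ^^ k) z) holomorphic_on S"
proof (induction k)
  case (Suc k)
  then show ?case
    unfolding funpow.simps o_apply perturb_def
    by (intro holomorphic_intros holomorphic_on_compose_entire[OF assms])
qed simp

lemma holomorphic_funpow_perturb_param:
  assumes "f holomorphic_on UNIV"
  shows "(\<lambda>e. (perturb f lam e ^^ k) z) holomorphic_on S"
proof (induction k)
  case (Suc k)
  then show ?case
    unfolding funpow.simps o_apply perturb_def
    by (intro holomorphic_intros holomorphic_on_compose_entire[OF assms])
qed simp

lemma continuous_on_funpow_perturb:
  assumes "f holomorphic_on UNIV"
  shows "continuous_on UNIV (\<lambda>p. (perturb f lam (fst p) ^^ k) (snd p))"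
proof (induction k)
  case (Suc k)
  have "continuous_on UNIV f" by (rule holomorphic_on_imp_continuous_on[OF assms])
  with Suc show ?case
    unfolding funpow.simps o_apply perturb_def
    by (intro continuous_intros) (auto intro: continuous_on_compose2)
qed (simp add: continuous_on_snd)

lemma deriv_funpow_perturb_Suc:
  assumes f: "f holomorphic_on UNIV"
  shows "deriv (\<lambda>e. (perturb f lam e ^^ Suc k) z) 0
    = deriv f ((f ^^ k) z) * deriv (\<lambda>e. (perturb f lam e ^^ k) z) 0 - lam * (f ^^ k) z"
proof -
  define X where "X = (\<lambda>e. (perturb f lam e ^^ k) z)"
  have X0: "X 0 = (f ^^ k) z" by (simp add: X_def)
  have "(X has_field_derivative deriv X 0) (at 0)"
    unfolding X_def by (rule holomorphic_derivI[OF holomorphic_funpow_perturb_param[OF f, where S=UNIV]]) auto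
  moreover have "(f has_field_derivative deriv f (X 0)) (at (X 0))"
    by (rule holomorphic_derivI[OF f]) auto
  ultimately have "((\<lambda>e. f (X e) - e * lam * X e) has_field_derivative
      deriv f (X 0) * deriv X 0 - lam * X 0) (at 0)"
    by (auto intro!: derivative_eq_intros DERIV_chain2[where f = f])
  then show ?thesis
    unfolding X0[symmetric] by (intro DERIV_imp_deriv) (simp add: X_def perturb_def)
qed

section \<open>Linearising coordinates of a Siegel disk\<close>

locale siegel_linearization =
  fixes f :: "complex \<Rightarrow> complex" and lam :: complex and \<Delta> :: "complex set"
    and \<phi> :: "complex \<Rightarrow> complex" and r :: real
  assumes entire: "f holomorphic_on UNIV"
    and lam_norm: "norm lam = 1" and lam_not_root_of_unity: "\<And>m. 0 < m \<Longrightarrow> lam ^ m \<noteq> 1"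
    and open_\<Delta>: "open \<Delta>" and zero_in_\<Delta>: "0 \<in> \<Delta>"
    and \<phi>_holomorphic: "\<phi> holomorphic_on \<Delta>" and \<phi>_bij: "bij_betw \<phi> \<Delta> (ball 0 r)" and \<phi>_0: "\<phi> 0 = 0"
    and f_maps_\<Delta>: "\<And>z. z \<in> \<Delta> \<Longrightarrow> f z \<in> \<Delta>"
    and \<phi>_f: "\<And>z. z \<in> \<Delta> \<Longrightarrow> \<phi> (f z) = lam * \<phi> z"
begin

definition \<psi> :: "complex \<Rightarrow> complex" where
  "\<psi> = the_inv_into \<Delta> \<phi>"

lemma r_pos: "0 < r"
  using \<phi>_bij zero_in_\<Delta> \<phi>_0 by (force simp: bij_betw_def)

lemma \<phi>_in_ball: "z \<in> \<Delta> \<Longrightarrow> \<phi> z \<in> ball 0 r"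
  using \<phi>_bij by (auto simp: bij_betw_def)

lemma \<psi>_in_\<Delta>: "u \<in> ball 0 r \<Longrightarrow> \<psi> u \<in> \<Delta>"
  unfolding \<psi>_def using bij_betw_the_inv_into[OF \<phi>_bij] by (auto simp: bij_betw_def)

lemma \<phi>_\<psi>: "u \<in> ball 0 r \<Longrightarrow> \<phi> (\<psi> u) = u"
  unfolding \<psi>_def by (rule f_the_inv_into_f_bij_betw[OF \<phi>_bij])

lemma \<psi>_\<phi>: "z \<in> \<Delta> \<Longrightarrow> \<psi> (\<phi> z) = z"
  unfolding \<psi>_def using \<phi>_bij by (simp add: bij_betw_def the_inv_into_f_f)

lemma \<psi>_0: "\<psi> 0 = 0"
  using \<psi>_\<phi>[OF zero_in_\<Delta>] \<phi>_0 by simp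

lemma \<psi>_holomorphic_and_deriv:
  "\<psi> holomorphic_on ball 0 r \<and> deriv \<phi> 0 * deriv \<psi> 0 = 1"
proof -
  have inj: "inj_on \<phi> \<Delta>" and img: "\<phi> ` \<Delta> = ball 0 r" using \<phi>_bij by (auto simp: bij_betw_def)
  obtain g where g: "g holomorphic_on ball 0 r" "deriv \<phi> 0 * deriv g (\<phi> 0) = 1"
    and g_\<phi>: "\<And>z. z \<in> \<Delta> \<Longrightarrow> g (\<phi> z) = z"
    using holomorphic_has_inverse[OF \<phi>_holomorphic open_\<Delta> inj] zero_in_\<Delta> img by metis
  have g\<psi>: "g u = \<psi> u" if "u \<in> ball 0 r" for u
    using g_\<phi>[OF \<psi>_in_\<Delta>[OF that]] \<phi>_\<psi>[OF that] by simp
  have "(g has_field_derivative deriv g 0) (at 0)"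
    by (rule holomorphic_derivI[OF g(1)]) (use r_pos in auto)
  then have "(\<psi> has_field_derivative deriv g 0) (at 0)"
    by (rule has_field_derivative_transform_within_open[OF _ open_ball[of 0 r]]) (use r_pos g\<psi> in auto)
  then have "deriv \<psi> 0 = deriv g 0" by (rule DERIV_imp_deriv)
  then show ?thesis using holomorphic_transform[OF g(1) g\<psi>] g(2) \<phi>_0 by simp
qed

lemma \<psi>_holomorphic: "\<psi> holomorphic_on ball 0 r"
  using \<psi>_holomorphic_and_deriv by blast

lemma rotate_in_ball: "u \<in> ball 0 r \<Longrightarrow> lam ^ k * u \<in> ball 0 r"
  by (simp add: norm_mult norm_power lam_norm)

lemma f_\<psi>: "u \<in> ball 0 r \<Longrightarrow> f (\<psi> u) = \<psi> (lam * u)"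
  by (metis \<phi>_f \<psi>_\<phi> \<phi>_\<psi> \<psi>_in_\<Delta> f_maps_\<Delta>)

lemma funpow_f_\<psi>: "u \<in> ball 0 r \<Longrightarrow> (f ^^ k) (\<psi> u) = \<psi> (lam ^ k * u)"
proof (induction k)
  case (Suc k)
  then show ?case
    using f_\<psi>[OF rotate_in_ball[OF Suc.prems, of k]] by (simp add: mult.assoc)
qed simp

lemma f_0: "f 0 = 0"
  using f_\<psi>[of 0] \<psi>_0 r_pos by simp

lemma deriv_\<phi>_f: "z \<in> \<Delta> \<Longrightarrow> deriv \<phi> (f z) * deriv f z = lam * deriv \<phi> z"
proof -
  assume z: "z \<in> \<Delta>"
  have "((\<lambda>z. \<phi> (f z)) has_field_derivative deriv \<phi> (f z) * deriv f z) (at z)"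
    by (rule DERIV_chain2[OF holomorphic_derivI[OF \<phi>_holomorphic open_\<Delta>] holomorphic_derivI[OF entire]])
       (use z f_maps_\<Delta> in auto)
  then have "((\<lambda>z. lam * \<phi> z) has_field_derivative deriv \<phi> (f z) * deriv f z) (at z)"
    by (rule has_field_derivative_transform_within_open[OF _ open_\<Delta> z]) (simp add: \<phi>_f)
  moreover have "((\<lambda>z. lam * \<phi> z) has_field_derivative lam * deriv \<phi> z) (at z)"
    by (rule DERIV_cmult[OF holomorphic_derivI[OF \<phi>_holomorphic open_\<Delta> z]])
  ultimately show ?thesis by (rule DERIV_unique)
qed

text \<open>drift u is the derivative at e = 0 of \<phi> (f (\<psi> u) - e * lam * \<psi> u), divided by -lam * u;
  drift 0 = 1 because \<phi>' 0 * \<psi>' 0 = 1.\<close>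
definition drift :: "complex \<Rightarrow> complex" where
  "drift u = (if u = 0 then 1 else deriv \<phi> (f (\<psi> u)) * \<psi> u / u)"

lemma drift_holomorphic: "drift holomorphic_on ball 0 r"
proof -
  define A where "A u = deriv \<phi> (f (\<psi> u)) * \<psi> u" for u
  have "(\<lambda>u. f (\<psi> u)) holomorphic_on ball 0 r"
    by (rule holomorphic_on_compose_entire[OF entire \<psi>_holomorphic])
  then have "(\<lambda>u. deriv \<phi> (f (\<psi> u))) holomorphic_on ball 0 r"
    using holomorphic_on_compose_gen[OF _ holomorphic_deriv[OF \<phi>_holomorphic open_\<Delta>]]
      f_maps_\<Delta> \<psi>_in_\<Delta> by (force simp: o_def)
  then have A: "A holomorphic_on ball 0 r"
    unfolding A_def[abs_def] by (intro holomorphic_intros \<psi>_holomorphic)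
  have "(A has_field_derivative deriv \<phi> 0 * deriv \<psi> 0) (at 0)"
  proof -
    have "((\<lambda>u. deriv \<phi> (f (\<psi> u))) has_field_derivative deriv (\<lambda>u. deriv \<phi> (f (\<psi> u))) 0) (at 0)"
      by (rule holomorphic_derivI[OF \<open>(\<lambda>u. deriv \<phi> (f (\<psi> u))) holomorphic_on ball 0 r\<close>]) (use r_pos in auto)
    moreover have "(\<psi> has_field_derivative deriv \<psi> 0) (at 0)"
      by (rule holomorphic_derivI[OF \<psi>_holomorphic]) (use r_pos in auto)
    ultimately have "(A has_field_derivative
        deriv (\<lambda>u. deriv \<phi> (f (\<psi> u))) 0 * \<psi> 0 + deriv \<psi> 0 * deriv \<phi> (f (\<psi> 0))) (at 0)"
      unfolding A_def[abs_def] by (rule DERIV_mult)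
    then show ?thesis by (simp add: \<psi>_0 f_0 mult.commute)
  qed
  then have "deriv A 0 = 1"
    using \<psi>_holomorphic_and_deriv by (simp add: DERIV_imp_deriv)
  then have "drift = (\<lambda>u. if u = 0 then deriv A 0 else (A u - A 0) / (u - 0))"
    by (auto simp: drift_def A_def \<psi>_0 fun_eq_iff)
  then show ?thesis using pole_lemma_open[OF A open_ball] by simp
qed

lemma deriv_\<phi>_funpow_perturb:
  assumes w: "w \<in> ball 0 r" "w \<noteq> 0"
  shows "deriv \<phi> ((f ^^ k) (\<psi> w)) * deriv (\<lambda>e. (perturb f lam e ^^ k) (\<psi> w)) 0
    = - (lam ^ k * w * (\<Sum>j<k. drift (lam ^ j * w)))"
proof (induction k)
  case (Suc k)
  define z where "z = (f ^^ k) (\<psi> w)"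
  have z: "z = \<psi> (lam ^ k * w)" "z \<in> \<Delta>"
    using funpow_f_\<psi>[OF w(1)] \<psi>_in_\<Delta>[OF rotate_in_ball[OF w(1)]] by (auto simp: z_def)
  have drift: "deriv \<phi> (f z) * z = lam ^ k * w * drift (lam ^ k * w)"
    unfolding drift_def z(1) using w(2) lam_norm by auto
  have "deriv \<phi> ((f ^^ Suc k) (\<psi> w)) * deriv (\<lambda>e. (perturb f lam e ^^ Suc k) (\<psi> w)) 0
      = deriv \<phi> (f z) * deriv f z * deriv (\<lambda>e. (perturb f lam e ^^ k) (\<psi> w)) 0
        - lam * (deriv \<phi> (f z) * z)"
    unfolding deriv_funpow_perturb_Suc[OF entire] by (simp add: z_def algebra_simps)
  also have "\<dots> = lam * (deriv \<phi> z * deriv (\<lambda>e. (perturb f lam e ^^ k) (\<psi> w)) 0)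
        - lam * (deriv \<phi> (f z) * z)"
    by (simp add: deriv_\<phi>_f[OF z(2)])
  also have "\<dots> = lam * - (lam ^ k * w * (\<Sum>j<k. drift (lam ^ j * w)))
        - lam * (lam ^ k * w * drift (lam ^ k * w))"
    by (simp only: Suc.IH[folded z_def] drift)
  also have "\<dots> = - (lam ^ Suc k * w * (\<Sum>j<Suc k. drift (lam ^ j * w)))"
    by (simp add: algebra_simps)
  finally show ?case .
qed simp

lemma drift_averages_near_1:
  assumes "t < r"
  obtains N where "0 < N"
    "\<And>w. norm w \<le> t \<Longrightarrow> real N / 2 \<le> Re (\<Sum>k<N. drift (lam ^ k * w))"
    "\<And>w. norm w \<le> t \<Longrightarrow> norm (\<Sum>k<N. drift (lam ^ k * w)) \<le> 3/2 * real N"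
proof -
  have "uniform_limit (cball 0 t) (\<lambda>N w. (\<Sum>k<N. drift (lam ^ k * w)) / of_nat N) (\<lambda>w. drift 0) sequentially"
    by (rule uniform_limit_rotation_averages[OF drift_holomorphic assms lam_norm lam_not_root_of_unity])
  from uniform_limitD[OF this, of "1/2"]
  have "\<forall>\<^sub>F N in sequentially. 0 < N \<and> (\<forall>w\<in>cball 0 t. dist ((\<Sum>k<N. drift (lam ^ k * w)) / of_nat N) 1 < 1/2)"
    by (intro eventually_conj eventually_gt_at_top) (simp_all add: drift_def)
  then obtain N where "0 < N" "\<And>w. norm w \<le> t \<Longrightarrow> dist ((\<Sum>k<N. drift (lam ^ k * w)) / of_nat N) 1 < 1/2"
    unfolding eventually_sequentially by auto
  then show ?thesis using that bounds_of_average_near_1 by metis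
qed

definition linearized_iterate :: "nat \<Rightarrow> complex \<Rightarrow> complex \<Rightarrow> complex" where
  "linearized_iterate N e w = \<phi> ((perturb f lam e ^^ N) (\<psi> w))"

lemma linearized_iterate_unperturbed:
  assumes "w \<in> ball 0 r"
  shows "linearized_iterate N 0 w = lam ^ N * w"
  using \<phi>_\<psi>[OF rotate_in_ball[OF assms]] by (simp add: linearized_iterate_def funpow_f_\<psi>[OF assms])

lemma perturbed_iterates_stay_in_\<Delta>:
  assumes "t1 < r"
  obtains \<rho> where "0 < \<rho>" "\<And>e w. norm e < \<rho> \<Longrightarrow> w \<in> cball 0 t1 \<Longrightarrow> (perturb f lam e ^^ N) (\<psi> w) \<in> \<Delta>"
proof -
  define \<Phi> where "\<Phi> p = (perturb f lam (fst p) ^^ N) (snd p)" for p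
  have "continuous_on UNIV \<Phi>"
    unfolding \<Phi>_def by (rule continuous_on_funpow_perturb[OF entire])
  moreover have "compact (\<psi> ` cball 0 t1)"
    by (intro compact_continuous_image holomorphic_on_imp_continuous_on
        holomorphic_on_subset[OF \<psi>_holomorphic]) (use assms in auto)
  moreover have "\<Phi> (0, z) \<in> \<Delta>" if z: "z \<in> \<psi> ` cball 0 t1" for z
  proof -
    from z obtain u where "u \<in> cball 0 t1" and zu: "z = \<psi> u" by auto
    then have u: "u \<in> ball 0 r" "z = \<psi> u" using assms by auto
    then show ?thesis
      using \<psi>_in_\<Delta>[OF rotate_in_ball[OF u(1)]] by (simp add: \<Phi>_def funpow_f_\<psi>)
  qed
  ultimately obtain \<rho> where "0 < \<rho>" "\<And>e z. dist e 0 < \<rho> \<Longrightarrow> z \<in> \<psi> ` cball 0 t1 \<Longrightarrow> \<Phi> (e, z) \<in> \<Delta>"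
    using tube_lemma_ball[OF _ _ open_\<Delta>] by metis
  then show ?thesis using that by (auto simp: \<Phi>_def)
qed

lemma linearized_iterate_has_derivative_param:
  assumes w: "w \<in> ball 0 r" "w \<noteq> 0"
  shows "((\<lambda>e. linearized_iterate N e w) has_field_derivative
    - (lam ^ N * w * (\<Sum>j<N. drift (lam ^ j * w)))) (at 0)"
proof -
  have "(perturb f lam 0 ^^ N) (\<psi> w) \<in> \<Delta>"
    using \<psi>_in_\<Delta>[OF rotate_in_ball[OF w(1)]] by (simp add: funpow_f_\<psi>[OF w(1)])
  then have "(\<phi> has_field_derivative deriv \<phi> ((perturb f lam 0 ^^ N) (\<psi> w)))
      (at ((perturb f lam 0 ^^ N) (\<psi> w)))"
    by (rule holomorphic_derivI[OF \<phi>_holomorphic open_\<Delta>])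
  moreover have "((\<lambda>e. (perturb f lam e ^^ N) (\<psi> w)) has_field_derivative
      deriv (\<lambda>e. (perturb f lam e ^^ N) (\<psi> w)) 0) (at 0)"
    by (rule holomorphic_derivI[OF holomorphic_funpow_perturb_param[OF entire, where S=UNIV]]) auto
  ultimately have "((\<lambda>e. \<phi> ((perturb f lam e ^^ N) (\<psi> w))) has_field_derivative
      deriv \<phi> ((f ^^ N) (\<psi> w)) * deriv (\<lambda>e. (perturb f lam e ^^ N) (\<psi> w)) 0) (at 0)"
    using DERIV_chain2 by fastforce
  then show ?thesis
    using deriv_\<phi>_funpow_perturb[OF w] by (simp add: linearized_iterate_def)
qed

lemma norm_linearized_iterate_le:
  assumes w: "norm w = t" "0 < t" "t < r"
    and stay: "\<And>e. norm e < \<rho>0 \<Longrightarrow> (perturb f lam e ^^ N) (\<psi> w) \<in> \<Delta>"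
    and \<rho>: "0 < \<rho>" "\<rho> < \<rho>0" and \<epsilon>: "0 \<le> \<epsilon>" "\<epsilon> \<le> \<rho> / 2"
    and S: "S = (\<Sum>j<N. drift (lam ^ j * w))" "a \<le> Re S" "\<epsilon> * a \<le> 1"
  shows "norm (linearized_iterate N (of_real \<epsilon>) w)
    \<le> t * (1 - \<epsilon> * a + \<epsilon>^2 * (norm S)^2 / 2) + 2 * r * \<epsilon>^2 / \<rho>^2"
proof -
  define h where "h e = linearized_iterate N e w" for e
  have wr: "w \<in> ball 0 r" "w \<noteq> 0" using w by auto
  have "(\<phi> \<circ> (\<lambda>e. (perturb f lam e ^^ N) (\<psi> w))) holomorphic_on ball 0 \<rho>0"
    by (rule holomorphic_on_compose_gen[OF holomorphic_funpow_perturb_param[OF entire] \<phi>_holomorphic])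
       (use stay in auto)
  then have hol: "h holomorphic_on ball 0 \<rho>0"
    by (simp add: h_def[abs_def] linearized_iterate_def o_def)
  have bound: "norm (h e) \<le> r" if "e \<in> ball 0 \<rho>0" for e
    using \<phi>_in_ball[OF stay, of e] that by (simp add: h_def linearized_iterate_def)
  have h0: "h 0 = lam ^ N * w" by (simp add: h_def linearized_iterate_unperturbed[OF wr(1)])
  have dh: "deriv h 0 = - h 0 * S"
    using DERIV_imp_deriv[OF linearized_iterate_has_derivative_param[OF wr]]
    by (simp add: h_def[abs_def] S(1) linearized_iterate_unperturbed[OF wr(1)])
  have "norm (h 0) = t" by (simp add: h0 norm_mult norm_power lam_norm w(1))
  moreover have "norm (h (of_real \<epsilon>)) \<le> norm (h 0) * (1 - \<epsilon> * a + \<epsilon>^2 * (norm S)^2 / 2) + 2 * r * \<epsilon>^2 / \<rho>^2"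
    by (rule norm_holomorphic_first_order_le[OF hol bound \<rho> \<epsilon> dh S(2,3)])
  ultimately show ?thesis by (simp add: h_def)
qed

lemma linearized_iterate_contracts_on_circle:
  assumes t: "0 < t" "t < t1" "t1 < r"
  obtains N \<delta> where "0 < N" "0 < \<delta>"
    "\<And>\<epsilon> w. 0 < \<epsilon> \<Longrightarrow> \<epsilon> < \<delta> \<Longrightarrow> w \<in> cball 0 t1 \<Longrightarrow> (perturb f lam (of_real \<epsilon>) ^^ N) (\<psi> w) \<in> \<Delta>"
    "\<And>\<epsilon> w. 0 < \<epsilon> \<Longrightarrow> \<epsilon> < \<delta> \<Longrightarrow> norm w = t \<Longrightarrow>
      norm (linearized_iterate N (of_real \<epsilon>) w) \<le> (1 - \<epsilon> * real N / 4) * t"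
proof -
  obtain N where N: "0 < N"
    and ReS: "\<And>w. norm w \<le> t \<Longrightarrow> real N / 2 \<le> Re (\<Sum>k<N. drift (lam ^ k * w))"
    and normS: "\<And>w. norm w \<le> t \<Longrightarrow> norm (\<Sum>k<N. drift (lam ^ k * w)) \<le> 3/2 * real N"
    using drift_averages_near_1[of t] t by auto
  obtain \<rho>0 where "0 < \<rho>0"
    and stay: "\<And>e w. norm e < \<rho>0 \<Longrightarrow> w \<in> cball 0 t1 \<Longrightarrow> (perturb f lam e ^^ N) (\<psi> w) \<in> \<Delta>"
    using perturbed_iterates_stay_in_\<Delta>[OF t(3)] by metis
  define \<rho> where "\<rho> = \<rho>0 / 2"
  have \<rho>: "0 < \<rho>" "\<rho> < \<rho>0" using \<open>0 < \<rho>0\<close> by (auto simp: \<rho>_def)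
  (* The bound below is t - eps t N/2 + eps^2 C; the three terms of delta put eps inside the
     Taylor disc, ensure eps N/2 <= 1, and make eps^2 C at most eps t N/4. *)
  define C where "C = t * (3/2 * real N)^2 / 2 + 2 * r / \<rho>^2"
  have "0 < C" using t r_pos \<rho> by (simp add: C_def add_nonneg_pos)
  define \<delta> where "\<delta> = min (\<rho> / 2) (min (1 / real N) (t * real N / (4 * C)))"
  have "0 < \<delta>" using \<rho> N t \<open>0 < C\<close> by (simp add: \<delta>_def)
  show ?thesis
  proof (rule that[OF N \<open>0 < \<delta>\<close>])
    fix \<epsilon> :: real and w :: complex assume "0 < \<epsilon>" "\<epsilon> < \<delta>" "w \<in> cball 0 t1"
    then show "(perturb f lam (of_real \<epsilon>) ^^ N) (\<psi> w) \<in> \<Delta>"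
      using stay \<rho> by (simp add: \<delta>_def)
  next
    fix \<epsilon> :: real and w :: complex assume \<epsilon>: "0 < \<epsilon>" "\<epsilon> < \<delta>" and w: "norm w = t"
    define S where "S = (\<Sum>k<N. drift (lam ^ k * w))"
    have "\<epsilon> * (real N / 2) \<le> 1"
      using \<epsilon> N by (simp add: \<delta>_def field_simps)
    then have "norm (linearized_iterate N (of_real \<epsilon>) w)
        \<le> t * (1 - \<epsilon> * (real N / 2) + \<epsilon>^2 * (norm S)^2 / 2) + 2 * r * \<epsilon>^2 / \<rho>^2"
      using norm_linearized_iterate_le[OF w t(1) _ stay \<rho>, of \<epsilon> S "real N / 2"] t w \<epsilon> ReS[of w]
      by (simp add: S_def \<delta>_def)
    also have "\<dots> \<le> t * (1 - \<epsilon> * (real N / 2) + \<epsilon>^2 * (3/2 * real N)^2 / 2) + 2 * r * \<epsilon>^2 / \<rho>^2"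
      using normS[of w] w t by (intro add_right_mono mult_left_mono add_left_mono divide_right_mono
          mult_left_mono power_mono) (auto simp: S_def)
    also have "\<dots> = t - \<epsilon> * (t * real N / 2) + \<epsilon> * (\<epsilon> * C)"
      by (simp add: C_def power2_eq_square algebra_simps)
    also have "\<dots> \<le> t - \<epsilon> * (t * real N / 2) + \<epsilon> * (t * real N / 4)"
      using \<epsilon> \<open>0 < C\<close> by (intro add_left_mono mult_left_mono) (auto simp: \<delta>_def field_simps)
    also have "\<dots> = (1 - \<epsilon> * real N / 4) * t" by (simp add: algebra_simps)
    finally show "norm (linearized_iterate N (of_real \<epsilon>) w) \<le> (1 - \<epsilon> * real N / 4) * t" .
  qed
qed

lemma linearized_iterate_holomorphic:
  assumes "t1 \<le> r" and stay: "\<And>w. w \<in> ball 0 t1 \<Longrightarrow> (perturb f lam e ^^ N) (\<psi> w) \<in> \<Delta>"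
  shows "linearized_iterate N e holomorphic_on ball 0 t1"
proof -
  have "(\<phi> \<circ> ((perturb f lam e ^^ N) \<circ> \<psi>)) holomorphic_on ball 0 t1"
  proof (intro holomorphic_on_compose_gen[OF _ \<phi>_holomorphic])
    show "((perturb f lam e ^^ N) \<circ> \<psi>) holomorphic_on ball 0 t1"
      using assms(1) by (intro holomorphic_on_compose_gen[OF _ holomorphic_funpow_perturb[OF entire]]
          holomorphic_on_subset[OF \<psi>_holomorphic]) auto
  qed (use stay in auto)
  then show ?thesis by (simp add: linearized_iterate_def[abs_def] o_def)
qed

lemma linearized_iterate_fixes_0: "linearized_iterate N e 0 = 0"
  by (simp add: linearized_iterate_def \<psi>_0 funpow_perturb_fixes_0 f_0 \<phi>_0)

lemma orbit_tendsto_0_if_linearized_iterate_contracts: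
  assumes "0 < N" and t: "0 < t" "t < t1" "t1 \<le> r"
    and stay: "\<And>w. w \<in> ball 0 t1 \<Longrightarrow> (perturb f lam e ^^ N) (\<psi> w) \<in> \<Delta>"
    and circle: "\<And>w. norm w = t \<Longrightarrow> norm (linearized_iterate N e w) \<le> c * t" and "c < 1"
    and w: "w \<in> ball 0 t"
  shows "(\<lambda>n. (perturb f lam e ^^ n) (\<psi> w)) \<longlonglongrightarrow> 0"
proof -
  define H where "H = linearized_iterate N e"
  have contr: "norm (H v) \<le> c * norm v" if "norm v \<le> t" for v
    using Schwarz_cball_bound[OF linearized_iterate_holomorphic[OF t(3) stay]
        linearized_iterate_fixes_0 t(1,2) circle that] by (simp add: H_def)
  have "norm (H (of_real t)) \<le> c * t" using circle t by (simp add: H_def)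
  then have "0 \<le> c * t" by (rule order_trans[OF norm_ge_zero])
  then have "0 \<le> c" using t by (simp add: zero_le_mult_iff)
  have "H v \<in> ball 0 t" if "v \<in> ball 0 t" for v
    using contr[of v] that \<open>0 \<le> c\<close> \<open>c < 1\<close> mult_left_le_one_le[of "norm v" c] by simp
  moreover have "(perturb f lam e ^^ N) (\<psi> v) = \<psi> (H v)" if "v \<in> ball 0 t" for v
    using \<psi>_\<phi>[OF stay] that t by (simp add: H_def linearized_iterate_def)
  ultimately have "((perturb f lam e ^^ N) ^^ n) (\<psi> w) = \<psi> ((H ^^ n) w)" for n
    using funpow_semiconj[OF _ _ w] by metis
  moreover have "(\<lambda>n. \<psi> ((H ^^ n) w)) \<longlonglongrightarrow> \<psi> 0"
  proof -
    have "isCont \<psi> 0"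
      using holomorphic_on_imp_continuous_on[OF \<psi>_holomorphic] r_pos
      by (simp add: continuous_on_eq_continuous_at)
    moreover have "(\<lambda>n. (H ^^ n) w) \<longlonglongrightarrow> 0"
      by (rule funpow_tendsto_0_if_contraction[OF contr \<open>0 \<le> c\<close> \<open>c < 1\<close>]) (use w in auto)
    ultimately show ?thesis by (rule isCont_tendsto_compose)
  qed
  ultimately have "(\<lambda>n. ((perturb f lam e ^^ N) ^^ n) (\<psi> w)) \<longlonglongrightarrow> 0" by (simp add: \<psi>_0)
  moreover have "continuous_on UNIV (perturb f lam e)"
    using holomorphic_on_imp_continuous_on[OF holomorphic_funpow_perturb[OF entire, where k=1 and S=UNIV]]
    by simp
  moreover have "perturb f lam e 0 = 0" by (simp add: perturb_def f_0)
  ultimately show ?thesis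
    using orbit_tendsto_fixpoint_if_orbit_of_iterate \<open>0 < N\<close> by blast
qed

lemma ball_subset_basin_perturb:
  assumes t: "0 < t" "t < r"
  obtains \<delta> where "0 < \<delta>" "\<And>\<epsilon>. 0 < \<epsilon> \<Longrightarrow> \<epsilon> < \<delta> \<Longrightarrow> \<psi> ` ball 0 t \<subseteq> basin (perturb f lam (of_real \<epsilon>))"
proof -
  define t1 where "t1 = (t + r) / 2"
  have t1: "t < t1" "t1 < r" using t by (auto simp: t1_def)
  obtain N \<delta> where "0 < N" "0 < \<delta>"
    and stay: "\<And>\<epsilon> w. 0 < \<epsilon> \<Longrightarrow> \<epsilon> < \<delta> \<Longrightarrow> w \<in> cball 0 t1 \<Longrightarrow> (perturb f lam (of_real \<epsilon>) ^^ N) (\<psi> w) \<in> \<Delta>"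
    and circle: "\<And>\<epsilon> w. 0 < \<epsilon> \<Longrightarrow> \<epsilon> < \<delta> \<Longrightarrow> norm w = t \<Longrightarrow>
      norm (linearized_iterate N (of_real \<epsilon>) w) \<le> (1 - \<epsilon> * real N / 4) * t"
    using linearized_iterate_contracts_on_circle[OF t(1) t1] by metis
  show ?thesis
  proof (rule that[OF \<open>0 < \<delta>\<close>], safe)
    fix \<epsilon> :: real and w :: complex assume \<epsilon>: "0 < \<epsilon>" "\<epsilon> < \<delta>" and w: "w \<in> ball 0 t"
    have "(\<lambda>n. (perturb f lam (of_real \<epsilon>) ^^ n) (\<psi> w)) \<longlonglongrightarrow> 0"
    proof (rule orbit_tendsto_0_if_linearized_iterate_contracts[OF \<open>0 < N\<close> t(1) t1(1) _ _ _ _ w])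
      show "norm (linearized_iterate N (of_real \<epsilon>) v) \<le> (1 - \<epsilon> * real N / 4) * t" if "norm v = t" for v
        using circle[OF \<epsilon> that] .
    qed (use t1 \<epsilon> stay \<open>0 < N\<close> in auto)
    then show "\<psi> w \<in> basin (perturb f lam (of_real \<epsilon>))" by (simp add: basin_def)
  qed
qed

lemma compact_subset_immediate_basin_perturb:
  assumes "compact K" "K \<subseteq> \<Delta>"
  obtains \<delta> where "0 < \<delta>"
    "\<And>\<epsilon>. 0 < \<epsilon> \<Longrightarrow> \<epsilon> < \<delta> \<Longrightarrow> K \<subseteq> immediate_basin (perturb f lam (of_real \<epsilon>))"
proof -
  have "compact (\<phi> ` K)"
    using assms by (intro compact_continuous_image holomorphic_on_imp_continuous_on
        holomorphic_on_subset[OF \<phi>_holomorphic])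
  moreover have "\<phi> ` K \<subseteq> ball 0 r" using assms(2) \<phi>_in_ball by auto
  ultimately obtain t where t: "0 < t" "t < r" "\<phi> ` K \<subseteq> ball 0 t"
    using compact_subset_ball_imp_smaller_ball r_pos by metis
  then have K: "K \<subseteq> \<psi> ` ball 0 t"
    using assms(2) \<psi>_\<phi> by (force simp: image_iff)
  have "connected (\<psi> ` ball 0 t)"
    using t by (intro connected_continuous_image connected_ball holomorphic_on_imp_continuous_on
        holomorphic_on_subset[OF \<psi>_holomorphic]) auto
  moreover have "0 \<in> \<psi> ` ball 0 t" using t \<psi>_0 by (metis centre_in_ball imageI)
  moreover obtain \<delta> where "0 < \<delta>"
    "\<And>\<epsilon>. 0 < \<epsilon> \<Longrightarrow> \<epsilon> < \<delta> \<Longrightarrow> \<psi> ` ball 0 t \<subseteq> basin (perturb f lam (of_real \<epsilon>))"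
    using ball_subset_basin_perturb[OF t(1,2)] by metis
  ultimately show ?thesis
    using that K connected_component_maximal unfolding immediate_basin_def by (metis subset_trans)
qed

end

lemma irrationally_indifferent_norm: "irrationally_indifferent lam \<Longrightarrow> norm lam = 1"
  by (auto simp: irrationally_indifferent_def)

lemma irrationally_indifferent_not_root_of_unity:
  assumes "irrationally_indifferent lam" "0 < m"
  shows "lam ^ m \<noteq> 1"
proof
  assume "lam ^ m = 1"
  obtain \<theta> where \<theta>: "\<theta> \<notin> \<rat>" "lam = exp (2 * pi * \<i> * complex_of_real \<theta>)"
    using assms(1) by (auto simp: irrationally_indifferent_def)
  then have "exp (of_nat m * (2 * pi * \<i> * complex_of_real \<theta>)) = 1"
    using \<open>lam ^ m = 1\<close> by (simp add: exp_of_nat_mult)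
  then obtain n :: int where "real m * (2 * pi * \<theta>) = of_int (2 * n) * pi"
    unfolding exp_eq_1 by auto
  then have "\<theta> = of_int n / of_nat m" using assms(2) by (simp add: field_simps)
  with \<theta>(1) show False by simp
qed

lemma cubic_holomorphic: "cubic lam b holomorphic_on S"
  unfolding cubic_def by (intro holomorphic_intros)

lemma perturbed_eq_perturb: "perturbed lam b eps = perturb (cubic lam b) lam (of_real eps)"
  by (simp add: perturbed_def perturb_def cubic_def fun_eq_iff algebra_simps)

theorem corollary4p2:
  fixes lam b :: complex and \<Delta> K :: "complex set"
  assumes "norm lam \<le> 1"
    and "siegel_disk (cubic lam b) lam \<Delta>"
    and "compact K" and "K \<subseteq> \<Delta>"
  shows "\<exists>\<delta>>0. \<forall>eps. 0 < eps \<and> eps < \<delta> \<longrightarrow> K \<subseteq> immediate_basin (perturbed lam b eps)"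
proof -
  have irr: "irrationally_indifferent lam" and "linearization_domain (cubic lam b) lam \<Delta>"
    using assms(2) by (auto simp: siegel_disk_def)
  then obtain \<phi> r where "open \<Delta>" "0 \<in> \<Delta>" "\<phi> holomorphic_on \<Delta>" "bij_betw \<phi> \<Delta> (ball 0 r)" "\<phi> 0 = 0"
    "\<forall>z\<in>\<Delta>. cubic lam b z \<in> \<Delta> \<and> \<phi> (cubic lam b z) = lam * \<phi> z"
    unfolding linearization_domain_def by metis
  then interpret siegel_linearization "cubic lam b" lam \<Delta> \<phi> r
    using irrationally_indifferent_norm[OF irr] irrationally_indifferent_not_root_of_unity[OF irr]
    by unfold_locales (auto intro: cubic_holomorphic)
  obtain \<delta> where "0 < \<delta>" "\<And>\<epsilon>. 0 < \<epsilon> \<Longrightarrow> \<epsilon> < \<delta> \<Longrightarrow> K \<subseteq> immediate_basin (perturbed lam b \<epsilon>)"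
    using compact_subset_immediate_basin_perturb[OF assms(3,4)] unfolding perturbed_eq_perturb by metis
  then show ?thesis by blast
qed

end
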